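(* Let $0<r_j<\infty$ and $0<s_j<\infty$ for $j=1,\dots,n$, let $\rho=\otimes_{j=1}^n\gamma(r_j)$ and $\sigma=\otimes_{j=1}^n\gamma(s_j)$. Let $\alpha>1$ and let $V_{\sigma(\alpha-1)}$ and $V_{\rho(\alpha)}$ denote the covariance matrices of the gaussian states $\sigma^{\alpha-1}/\operatorname{tr}\sigma^{\alpha-1}$ and $\rho^\alpha/\operatorname{tr}\rho^\alpha$ respectively. Then $$V_{\sigma(\alpha-1)}>V_{\rho(\alpha)}\iff\alpha<\min\left\{\frac{s_j}{s_j-r_j}: j\in\{1,\dots,n\}\text{ such that } r_j<s_j\right\},$$ where the minimum of the empty set is $+\infty$.
   Context: One-mode Fock space: $\ell^2(\mathbb{Z}_{\ge 0})$ with orthonormal particle basis $\{|k\rangle\}$; $n$-mode space is the $n$-fold tensor product. For $0<s<\infty$, $\gamma(s)=(1-e^{-s})\sum_{k\ge0}e^{-ks}|k\rangle\langle k|$. For $\beta>0$, $\gamma(\mathbf{s})^\beta/\operatorname{tr}\gamma(\mathbf{s})^\beta=\otimes_j\gamma(\beta s_j)$, and the covariance matrix of the gaussian state $\otimes_j\gamma(t_j)$ is the $2n\times 2n$ matrix $\frac12\operatorname{diag}(\coth\frac{t_1}{2},\dots,\coth\frac{t_n}{2})\otimes I_2$. For real symmetric matrices, $A>B$ means $A-B$ is positive definite. *)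

theory Defs
  imports "HOL-Analysis.Analysis"
begin

definition coth :: "real \<Rightarrow> real" where
  "coth x = cosh x / sinh x"

definition diag_mat :: "('n::finite \<Rightarrow> real) \<Rightarrow> real^'n^'n" where
  "diag_mat d = (\<chi> i j. if i = j then d i else 0)"

definition kron :: "real^'n^'n \<Rightarrow> real^'k^'k \<Rightarrow> real^('n \<times> 'k)^('n \<times> 'k)" where
  "kron A B = (\<chi> p q. (A $ fst p $ fst q) * (B $ snd p $ snd q))"

(* covariance matrix of the n-mode gaussian state \<otimes>_j \<gamma>(t_j):
   (1/2) diag(coth(t_1/2),...,coth(t_n/2)) \<otimes> I_2, a 2n x 2n matrix *)
definition cov_gamma :: "('n::finite \<Rightarrow> real) \<Rightarrow> real^('n \<times> 2)^('n \<times> 2)" where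
  "cov_gamma t = kron (diag_mat (\<lambda>j. (1/2) * coth (t j / 2))) (mat 1 :: real^2^2)"

definition pos_def :: "real^'m^'m \<Rightarrow> bool" where
  "pos_def M \<longleftrightarrow> (\<forall>x. x \<noteq> 0 \<longrightarrow> x \<bullet> (M *v x) > 0)"

definition mat_gt :: "real^'m^'m \<Rightarrow> real^'m^'m \<Rightarrow> bool" where
  "mat_gt A B \<longleftrightarrow> pos_def (A - B)"

end

theory Submission
  imports Defs
begin

(* The covariance matrix of a product of thermal states is diagonal with entries
   coth(t_j/2)/2, and coth is strictly decreasing on (0,\<infinity>).  Hence the matrix inequality
   holds iff (\<alpha> - 1) s_j < \<alpha> r_j for every mode j, which is automatic when s_j \<le> r_j and
   amounts to \<alpha> < s_j/(s_j - r_j) when r_j < s_j. *)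

lemma coth_eq_1_plus: "x \<noteq> 0 \<Longrightarrow> coth x = 1 + 2 / (exp (2 * x) - 1)"
proof -
  assume "x \<noteq> 0"
  define e where "e = exp x"
  have "0 < e" and "e * e \<noteq> 1" and "exp (2 * x) = e * e"
    using \<open>x \<noteq> 0\<close> by (auto simp: e_def simp flip: exp_add)
  then show ?thesis
    unfolding coth_def sinh_def cosh_def exp_minus e_def[symmetric] by (simp add: field_simps)
qed

lemma coth_less_coth_iff: "0 < a \<Longrightarrow> 0 < b \<Longrightarrow> coth b < coth a \<longleftrightarrow> a < b"
proof -
  assume "0 < a" "0 < b"
  then have pos: "0 < exp (2 * a) - 1" "0 < exp (2 * b) - 1"
    by auto
  have "coth b < coth a \<longleftrightarrow> 2 / (exp (2 * b) - 1) < 2 / (exp (2 * a) - 1)"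
    using \<open>0 < a\<close> \<open>0 < b\<close> by (simp add: coth_eq_1_plus)
  also have "\<dots> \<longleftrightarrow> exp (2 * a) - 1 < exp (2 * b) - 1"
    using pos by (simp add: field_simps)
  finally show ?thesis
    by simp
qed

lemma diag_mat_diff: "diag_mat a - diag_mat b = diag_mat (\<lambda>j. a j - b j)"
  unfolding diag_mat_def by (simp add: vec_eq_iff)

lemma kron_diff_left: "kron A C - kron B C = kron (A - B) C"
  unfolding kron_def by (simp add: vec_eq_iff left_diff_distrib)

lemma kron_diag_mat_id_mult_vec:
  fixes d :: "'n::finite \<Rightarrow> real" and x :: "real^('n \<times> 'k::finite)"
  shows "kron (diag_mat d) (mat 1 :: real^'k^'k) *v x = (\<chi> p. d (fst p) * x $ p)"
proof -
  have "(if fst p = fst q then d (fst p) else 0) * (if snd p = snd q then 1 else 0) * x $ q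
      = (if q = p then d (fst p) * x $ p else 0)" for p q :: "'n \<times> 'k"
    by (cases p; cases q; auto)
  then show ?thesis
    unfolding matrix_vector_mult_def kron_def diag_mat_def mat_def by (simp add: vec_eq_iff)
qed

lemma quadratic_form_kron_diag_mat_id:
  fixes d :: "'n::finite \<Rightarrow> real" and x :: "real^('n \<times> 'k::finite)"
  shows "x \<bullet> (kron (diag_mat d) (mat 1 :: real^'k^'k) *v x) = (\<Sum>p\<in>UNIV. d (fst p) * (x $ p)\<^sup>2)"
  by (simp add: kron_diag_mat_id_mult_vec inner_vec_def power2_eq_square mult_ac)

lemma pos_def_kron_diag_mat_id_iff:
  fixes d :: "'n::finite \<Rightarrow> real"
  shows "pos_def (kron (diag_mat d) (mat 1 :: real^'k::finite^'k)) \<longleftrightarrow> (\<forall>j. 0 < d j)"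
proof
  assume pd: "pos_def (kron (diag_mat d) (mat 1 :: real^'k^'k))"
  show "\<forall>j. 0 < d j"
  proof
    fix j and k :: 'k
    define x :: "real^('n \<times> 'k)" where "x = axis (j, k) 1"
    have "x \<noteq> 0"
      by (simp add: x_def axis_eq_0_iff)
    then have "0 < (\<Sum>p\<in>UNIV. d (fst p) * (x $ p)\<^sup>2)"
      using pd by (simp add: pos_def_def quadratic_form_kron_diag_mat_id)
    also have "(\<Sum>p\<in>UNIV. d (fst p) * (x $ p)\<^sup>2) = (\<Sum>p\<in>UNIV. if p = (j, k) then d j else 0)"
      by (rule sum.cong) (auto simp: x_def axis_def)
    finally show "0 < d j"
      by simp
  qed
next
  assume pos: "\<forall>j. 0 < d j"
  show "pos_def (kron (diag_mat d) (mat 1 :: real^'k^'k))"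
    unfolding pos_def_def quadratic_form_kron_diag_mat_id
  proof (intro allI impI)
    fix x :: "real^('n \<times> 'k)"
    assume "x \<noteq> 0"
    then obtain p where "x $ p \<noteq> 0"
      by (metis vec_eq_iff zero_index)
    then have "0 < d (fst p) * (x $ p)\<^sup>2"
      using pos by simp
    also have "\<dots> \<le> (\<Sum>q\<in>UNIV. d (fst q) * (x $ q)\<^sup>2)"
      by (rule member_le_sum) (use pos in \<open>auto simp: less_imp_le\<close>)
    finally show "0 < (\<Sum>q\<in>UNIV. d (fst q) * (x $ q)\<^sup>2)" .
  qed
qed

lemma mat_gt_cov_gamma_iff:
  assumes "\<And>j. 0 < a j" and "\<And>j. 0 < b j"
  shows "mat_gt (cov_gamma a) (cov_gamma b) \<longleftrightarrow> (\<forall>j. a j < b j)"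
proof -
  have "coth (b j / 2) < coth (a j / 2) \<longleftrightarrow> a j < b j" for j
    using coth_less_coth_iff[of "a j / 2" "b j / 2"] assms by simp
  then show ?thesis
    unfolding mat_gt_def cov_gamma_def kron_diff_left diag_mat_diff pos_def_kron_diag_mat_id_iff
    by simp
qed

lemma diff_one_mult_less_mult_iff:
  fixes \<alpha> r s :: real
  assumes "0 < r" and "0 < s" and "1 < \<alpha>"
  shows "(\<alpha> - 1) * s < \<alpha> * r \<longleftrightarrow> (r < s \<longrightarrow> \<alpha> < s / (s - r))"
proof (cases "r < s")
  case True
  then show ?thesis
    by (simp add: less_divide_eq algebra_simps)
next
  case False
  have "(\<alpha> - 1) * s < \<alpha> * s"
    using assms by (simp add: algebra_simps)
  also have "\<dots> \<le> \<alpha> * r"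
    using False assms by simp
  finally have "(\<alpha> - 1) * s < \<alpha> * r" .
  with False show ?thesis
    by simp
qed

lemma ereal_less_INF_finite_iff:
  fixes f :: "'a \<Rightarrow> real"
  assumes "finite S"
  shows "ereal a < (INF j\<in>S. ereal (f j)) \<longleftrightarrow> (\<forall>j\<in>S. a < f j)"
proof (cases "S = {}")
  case True
  then show ?thesis
    by (simp add: top_ereal_def)
next
  case False
  then show ?thesis
    using assms by (simp add: finite_less_Inf_iff)
qed

theorem lemma3p5:
  fixes r s :: "'n::finite \<Rightarrow> real" and \<alpha> :: real
  assumes "\<And>j. 0 < r j" and "\<And>j. 0 < s j" and "1 < \<alpha>"
  shows "mat_gt (cov_gamma (\<lambda>j. (\<alpha> - 1) * s j)) (cov_gamma (\<lambda>j. \<alpha> * r j))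
     \<longleftrightarrow> ereal \<alpha> < (INF j \<in> {j. r j < s j}. ereal (s j / (s j - r j)))"
proof -
  have "mat_gt (cov_gamma (\<lambda>j. (\<alpha> - 1) * s j)) (cov_gamma (\<lambda>j. \<alpha> * r j))
      \<longleftrightarrow> (\<forall>j. (\<alpha> - 1) * s j < \<alpha> * r j)"
    using assms by (intro mat_gt_cov_gamma_iff) auto
  also have "\<dots> \<longleftrightarrow> (\<forall>j\<in>{j. r j < s j}. \<alpha> < s j / (s j - r j))"
    using diff_one_mult_less_mult_iff assms by auto
  also have "\<dots> \<longleftrightarrow> ereal \<alpha> < (INF j \<in> {j. r j < s j}. ereal (s j / (s j - r j)))"
    by (simp add: ereal_less_INF_finite_iff)
  finally show ?thesis .
qed

end
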